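(* For a metric space $(X,d)$ the following are equivalent: (1) $(X,d)$ is locally compact. (2) $\mathsf{K}(X)$ is a continuous semilattice, and $\xi^\sigma:(X,d)\to\Sigma\,\mathsf{K}((X,d))$, $x\mapsto\{x\}$, is continuous. (3) $\mathsf{K}((X,d))$ is a continuous semilattice, and $(X,d)$ has property Q. (4) $\mathsf{K}((X,d))$ is a continuous semilattice. (5) $(X,d)$ is core compact.
   Context: For a metric space, $\mathsf{K}(X)$ is the set of nonempty compact subsets ordered by reverse inclusion (suprema, when they exist, are intersections). Scott topology on a poset: upper sets $U$ such that every directed $D$ with existing supremum in $U$ meets $U$; $\Sigma Q$ is $Q$ with it. $a\ll b$ means for every directed $D$ with existing $\bigvee D\ge b$ some $d\in D$ has $d\ge a$; $\mathsf{K}(X)$ is a continuous semilattice if it is directed complete and each $K$ is the directed supremum of $\{L:L\ll K\}$. Property Q: for all $K_1,K_2\in\mathsf{K}(X)$, $K_1\ll K_2$ iff $K_2\subseteq\operatorname{int}K_1$. Core compact: the lattice of open sets is a continuous lattice. *)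

theory Defs
  imports "HOL-Analysis.Analysis"
begin

definition directed_in :: "'b set \<Rightarrow> ('b \<Rightarrow> 'b \<Rightarrow> bool) \<Rightarrow> 'b set \<Rightarrow> bool" where
  "directed_in P le D \<longleftrightarrow> D \<subseteq> P \<and> D \<noteq> {} \<and>
     (\<forall>a\<in>D. \<forall>b\<in>D. \<exists>c\<in>D. le a c \<and> le b c)"

definition is_sup_in :: "'b set \<Rightarrow> ('b \<Rightarrow> 'b \<Rightarrow> bool) \<Rightarrow> 'b set \<Rightarrow> 'b \<Rightarrow> bool" where
  "is_sup_in P le D s \<longleftrightarrow> s \<in> P \<and> (\<forall>d\<in>D. le d s) \<and>
     (\<forall>u\<in>P. (\<forall>d\<in>D. le d u) \<longrightarrow> le s u)"

definition directed_complete :: "'b set \<Rightarrow> ('b \<Rightarrow> 'b \<Rightarrow> bool) \<Rightarrow> bool" where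
  "directed_complete P le \<longleftrightarrow> (\<forall>D. directed_in P le D \<longrightarrow> (\<exists>s. is_sup_in P le D s))"

definition way_below :: "'b set \<Rightarrow> ('b \<Rightarrow> 'b \<Rightarrow> bool) \<Rightarrow> 'b \<Rightarrow> 'b \<Rightarrow> bool" where
  "way_below P le a b \<longleftrightarrow>
     (\<forall>D s. directed_in P le D \<and> is_sup_in P le D s \<and> le b s \<longrightarrow> (\<exists>d\<in>D. le a d))"

definition continuous_poset :: "'b set \<Rightarrow> ('b \<Rightarrow> 'b \<Rightarrow> bool) \<Rightarrow> bool" where
  "continuous_poset P le \<longleftrightarrow> directed_complete P le \<and>
     (\<forall>x\<in>P. directed_in P le {y\<in>P. way_below P le y x} \<and>
             is_sup_in P le {y\<in>P. way_below P le y x} x)"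

definition continuous_lattice :: "'b set \<Rightarrow> ('b \<Rightarrow> 'b \<Rightarrow> bool) \<Rightarrow> bool" where
  "continuous_lattice P le \<longleftrightarrow> (\<forall>A. A \<subseteq> P \<longrightarrow> (\<exists>s. is_sup_in P le A s)) \<and>
     continuous_poset P le"

definition scott_open :: "'b set \<Rightarrow> ('b \<Rightarrow> 'b \<Rightarrow> bool) \<Rightarrow> 'b set \<Rightarrow> bool" where
  "scott_open P le U \<longleftrightarrow> U \<subseteq> P \<and>
     (\<forall>u\<in>U. \<forall>v\<in>P. le u v \<longrightarrow> v \<in> U) \<and>
     (\<forall>D s. directed_in P le D \<and> is_sup_in P le D s \<and> s \<in> U \<longrightarrow> D \<inter> U \<noteq> {})"

definition Kspace :: "'a::metric_space set set" where
  "Kspace = {K. compact K \<and> K \<noteq> {}}"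

definition Kle :: "'a::metric_space set \<Rightarrow> 'a set \<Rightarrow> bool" where
  "Kle K L \<longleftrightarrow> L \<subseteq> K"

definition K_continuous_semilattice :: "'a::metric_space itself \<Rightarrow> bool" where
  "K_continuous_semilattice _ \<longleftrightarrow> continuous_poset (Kspace :: 'a set set) Kle"

definition xi_sigma_continuous :: "'a::metric_space itself \<Rightarrow> bool" where
  "xi_sigma_continuous _ \<longleftrightarrow>
     (\<forall>U. scott_open (Kspace :: 'a set set) Kle U \<longrightarrow> open {x::'a. {x} \<in> U})"

definition property_Q :: "'a::metric_space itself \<Rightarrow> bool" where
  "property_Q _ \<longleftrightarrow> (\<forall>K1\<in>(Kspace :: 'a set set). \<forall>K2\<in>Kspace.
     way_below Kspace Kle K1 K2 \<longleftrightarrow> K2 \<subseteq> interior K1)"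

definition core_compact :: "'a::topological_space itself \<Rightarrow> bool" where
  "core_compact _ \<longleftrightarrow> continuous_lattice {U::'a set. open U} (\<subseteq>)"

end

theory Submission
  imports Defs
begin

text \<open>In a metric space, for nonempty compact sets \<open>K1 \<ll> K2\<close> holds exactly when
  \<open>K2 \<subseteq> interior K1\<close>: a directed family of compact sets whose intersection lies in an
  open set has a member inside it, while a point of \<open>K2\<close> on the boundary of \<open>K1\<close> is the
  limit of a sequence outside \<open>K1\<close>, whose tails added to \<open>K2\<close> form a directed family with
  intersection \<open>K2\<close> none of whose members lies in \<open>K1\<close>. So property Q always holds, and
  \<open>K(X)\<close> is continuous iff every compact set is the intersection of its compact
  neighbourhoods, i.e. iff \<open>X\<close> is locally compact. For open sets, \<open>U \<ll> V\<close> whenever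
  \<open>U \<subseteq> K \<subseteq> V\<close> for a compact \<open>K\<close>, and conversely every closed set contained in some
  \<open>U \<ll> X\<close> is compact; this gives the equivalence with core compactness.\<close>

lemma directed_in_finite_upper_bound:
  assumes "directed_in P le D" "finite F" "F \<subseteq> D"
    and transitive: "\<And>a b c. le a b \<Longrightarrow> le b c \<Longrightarrow> le a c"
  shows "\<exists>d\<in>D. \<forall>f\<in>F. le f d"
  using \<open>finite F\<close> \<open>F \<subseteq> D\<close>
proof (induction F rule: finite_induct)
  case empty
  then show ?case using \<open>directed_in P le D\<close> by (auto simp: directed_in_def)
next
  case (insert x F)
  then obtain d where d: "d \<in> D" "\<forall>f\<in>F. le f d" by auto
  moreover have "x \<in> D" using insert.prems by simp
  ultimately obtain c where "c \<in> D" "le x c" "le d c"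
    using \<open>directed_in P le D\<close> unfolding directed_in_def by blast
  then show ?case using d transitive by blast
qed

lemma way_belowD:
  assumes "way_below P le a b" "directed_in P le D" "is_sup_in P le D s" "le b s"
  shows "\<exists>d\<in>D. le a d"
  using assms unfolding way_below_def by blast

subsection \<open>The poset of nonempty compact sets\<close>

lemma directed_in_Kspace_finite_upper_bound:
  assumes "directed_in (Kspace :: 'a::metric_space set set) Kle D" "finite F" "F \<subseteq> D"
  shows "\<exists>d\<in>D. \<forall>f\<in>F. f \<supseteq> d"
  using directed_in_finite_upper_bound[OF assms] by (auto simp: Kle_def)

text \<open>For \<open>U = {}\<close> this is the nonemptiness of \<open>\<Inter>D\<close>.\<close>
lemma directed_in_Kspace_member_subset_open:
  assumes dir: "directed_in (Kspace :: 'a::metric_space set set) Kle D"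
    and "open U" "\<Inter>D \<subseteq> U"
  shows "\<exists>d\<in>D. d \<subseteq> U"
proof (rule ccontr)
  assume none: "\<not> (\<exists>d\<in>D. d \<subseteq> U)"
  have DK: "D \<subseteq> Kspace" "D \<noteq> {}" using dir by (auto simp: directed_in_def)
  then obtain d0 where "d0 \<in> D" by blast
  have "d0 \<inter> (\<Inter>d\<in>D. d - U) \<noteq> {}"
  proof (rule compact_imp_fip_image)
    show "compact d0" using \<open>d0 \<in> D\<close> DK by (auto simp: Kspace_def)
    show "closed (d - U)" if "d \<in> D" for d
    proof (rule closed_Diff)
      show "closed d" using that DK by (auto simp: Kspace_def intro: compact_imp_closed)
    qed fact
    fix F assume "finite F" "F \<subseteq> D"
    then have "finite (insert d0 F)" "insert d0 F \<subseteq> D" using \<open>d0 \<in> D\<close> by auto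
    from directed_in_Kspace_finite_upper_bound[OF dir this]
    obtain d where d: "d \<in> D" "\<forall>f\<in>insert d0 F. d \<subseteq> f" ..
    obtain z where "z \<in> d" "z \<notin> U" using none d(1) by blast
    then have "z \<in> d0 \<inter> (\<Inter>f\<in>F. f - U)" using d(2) by blast
    then show "d0 \<inter> (\<Inter>f\<in>F. f - U) \<noteq> {}" by blast
  qed
  then obtain z where "z \<in> (\<Inter>d\<in>D. d - U)" by blast
  then show False using \<open>\<Inter>D \<subseteq> U\<close> \<open>D \<noteq> {}\<close> by blast
qed

lemma is_sup_in_Kspace_Inter:
  assumes dir: "directed_in (Kspace :: 'a::metric_space set set) Kle D"
  shows "is_sup_in Kspace Kle D (\<Inter>D)"
proof -
  have DK: "D \<subseteq> Kspace" "D \<noteq> {}" using dir by (auto simp: directed_in_def)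
  then obtain d0 where "d0 \<in> D" by blast
  have "\<Inter>D \<noteq> {}"
  proof
    assume "\<Inter>D = {}"
    then obtain d where "d \<in> D" "d \<subseteq> {}"
      using directed_in_Kspace_member_subset_open[OF dir open_empty] by auto
    then show False using DK(1) by (auto simp: Kspace_def)
  qed
  moreover have "compact (d0 \<inter> \<Inter>D)"
  proof (intro compact_Int_closed closed_Inter ballI)
    show "compact d0" using \<open>d0 \<in> D\<close> DK(1) by (auto simp: Kspace_def)
    show "closed d" if "d \<in> D" for d using that DK(1) by (auto simp: Kspace_def compact_imp_closed)
  qed
  moreover have "d0 \<inter> \<Inter>D = \<Inter>D" using \<open>d0 \<in> D\<close> by blast
  ultimately have "\<Inter>D \<in> Kspace" by (simp add: Kspace_def)
  then show ?thesis unfolding is_sup_in_def Kle_def by (simp add: Inter_lower Inter_greatest)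
qed

lemma directed_complete_Kspace: "directed_complete (Kspace :: 'a::metric_space set set) Kle"
  unfolding directed_complete_def using is_sup_in_Kspace_Inter by blast

lemma is_sup_in_Kspace_eq_Inter:
  assumes "directed_in (Kspace :: 'a::metric_space set set) Kle D" "is_sup_in Kspace Kle D s"
  shows "s = \<Inter>D"
proof
  show "s \<subseteq> \<Inter>D" using assms(2) by (simp add: is_sup_in_def Kle_def Inter_greatest)
  have "\<Inter>D \<in> Kspace" using is_sup_in_Kspace_Inter[OF assms(1)] by (simp add: is_sup_in_def)
  then show "\<Inter>D \<subseteq> s" using assms(2) unfolding is_sup_in_def Kle_def by (simp add: Inter_lower)
qed

lemma subset_interior_imp_way_below_Kspace:
  assumes "K2 \<subseteq> interior (K1 :: 'a::metric_space set)"
  shows "way_below Kspace Kle K1 K2"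
  unfolding way_below_def
proof (intro allI impI, elim conjE)
  fix D s assume dir: "directed_in Kspace Kle D" and "is_sup_in Kspace Kle D s" "Kle K2 s"
  then have "\<Inter>D \<subseteq> interior K1"
    using is_sup_in_Kspace_eq_Inter[OF dir] assms by (simp add: Kle_def)
  then obtain d where "d \<in> D" "d \<subseteq> interior K1"
    using directed_in_Kspace_member_subset_open[OF dir open_interior] by blast
  then show "\<exists>d\<in>D. Kle K1 d" using interior_subset unfolding Kle_def by blast
qed

text \<open>If \<open>x \<in> K2\<close> is the limit of points \<open>y n \<notin> K1\<close>, the compact sets
  \<open>K2 \<union> insert x (y ` {n..})\<close> decrease to \<open>K2\<close>, yet none of them lies in \<open>K1\<close>.\<close>
lemma way_below_Kspace_imp_subset_interior:
  assumes wb: "way_below Kspace Kle K1 K2" and "K2 \<in> Kspace"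
  shows "K2 \<subseteq> interior (K1 :: 'a::metric_space set)"
proof
  fix x assume "x \<in> K2"
  show "x \<in> interior K1"
  proof (rule ccontr)
    assume "x \<notin> interior K1"
    then have "x \<in> closure (- K1)" by (simp add: closure_complement)
    then obtain y where y: "\<And>n. y n \<notin> K1" and lim: "y \<longlonglongrightarrow> x"
      unfolding closure_sequential by auto
    define d where "d n = K2 \<union> insert x (y ` {n..})" for n
    have "compact (insert x (y ` {n..}))" for n
      using compactin_sequence_with_limit[of euclidean y x "y ` {n..}"] lim by auto
    then have "compact (d n)" for n
      unfolding d_def using \<open>K2 \<in> Kspace\<close> by (intro compact_Un) (auto simp: Kspace_def)
    then have dK: "d n \<in> Kspace" for n by (simp add: Kspace_def d_def)
    have mono: "d k \<subseteq> d n" if "n \<le> k" for n k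
      using that by (auto simp: d_def)
    have dir: "directed_in Kspace Kle (range d)"
      unfolding directed_in_def Kle_def
    proof (intro conjI ballI)
      fix a b assume "a \<in> range d" "b \<in> range d"
      then obtain i j where "a = d i" "b = d j" by blast
      then show "\<exists>c\<in>range d. c \<subseteq> a \<and> c \<subseteq> b"
        using mono[of i "max i j"] mono[of j "max i j"] by auto
    qed (use dK in auto)
    have "\<Inter>(range d) \<subseteq> K2"
    proof
      fix z assume z: "z \<in> \<Inter>(range d)"
      show "z \<in> K2"
      proof (rule ccontr)
        assume "z \<notin> K2"
        with z \<open>x \<in> K2\<close> have "x \<noteq> z" by (auto simp: d_def)
        then obtain N where "\<And>k. k \<ge> N \<Longrightarrow> y k \<noteq> z"
          using tendsto_imp_eventually_ne[OF lim \<open>x \<noteq> z\<close>] unfolding eventually_sequentially by blast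
        moreover have "z \<in> d N" using z by blast
        ultimately show False using \<open>z \<notin> K2\<close> \<open>x \<noteq> z\<close> by (auto simp: d_def)
      qed
    qed
    then have "\<Inter>(range d) = K2" by (auto simp: d_def)
    then have "is_sup_in Kspace Kle (range d) K2"
      using is_sup_in_Kspace_Inter[OF dir] by simp
    then obtain n where "d n \<subseteq> K1"
      using way_belowD[OF wb dir] by (auto simp: Kle_def)
    then show False using y[of n] by (auto simp: d_def)
  qed
qed

lemma way_below_Kspace_iff:
  "K2 \<in> Kspace \<Longrightarrow> way_below Kspace Kle K1 K2 \<longleftrightarrow> K2 \<subseteq> interior (K1 :: 'a::metric_space set)"
  using way_below_Kspace_imp_subset_interior subset_interior_imp_way_below_Kspace by blast

lemma property_Q_metric: "property_Q (X :: 'a::metric_space itself)"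
  unfolding property_Q_def using way_below_Kspace_iff by blast

lemma locally_compact_space_compact_neighbourhood:
  assumes "locally_compact_space (euclidean :: 'a::metric_space topology)" "compact (K :: 'a set)"
  obtains L where "compact L" "K \<subseteq> interior L"
proof -
  obtain U L where "open U" "compact L" "K \<subseteq> U" "U \<subseteq> L"
    using assms locally_compact_space_compact_closed_compact[of "euclidean :: 'a topology"]
    by (simp add: compactin_euclidean_iff) meson
  then show thesis using that interior_maximal by blast
qed

lemma directed_in_Kspace_compact_neighbourhoods:
  assumes lc: "locally_compact_space (euclidean :: 'a::metric_space topology)"
    and K: "K \<in> (Kspace :: 'a set set)"
  shows "directed_in Kspace Kle {L\<in>Kspace. K \<subseteq> interior L}"
  unfolding directed_in_def
proof (intro conjI ballI)
  obtain L0 where "compact L0" "K \<subseteq> interior L0"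
    using locally_compact_space_compact_neighbourhood[OF lc] K by (auto simp: Kspace_def)
  moreover have "L0 \<noteq> {}" using K \<open>K \<subseteq> interior L0\<close> interior_subset by (auto simp: Kspace_def)
  ultimately show "{L\<in>Kspace. K \<subseteq> interior L} \<noteq> {}" by (auto simp: Kspace_def)
  fix a b assume "a \<in> {L\<in>Kspace. K \<subseteq> interior L}" "b \<in> {L\<in>Kspace. K \<subseteq> interior L}"
  then have a: "compact a" "K \<subseteq> interior a" and b: "compact b" "K \<subseteq> interior b"
    by (auto simp: Kspace_def)
  have "compact (a \<inter> b)" using a b by (simp add: compact_Int)
  moreover have "K \<subseteq> interior (a \<inter> b)" using a b by simp
  moreover have "K \<noteq> {}" using K by (simp add: Kspace_def)
  ultimately have "a \<inter> b \<in> {L\<in>Kspace. K \<subseteq> interior L}"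
    using interior_subset unfolding Kspace_def by blast
  then show "\<exists>c\<in>{L\<in>Kspace. K \<subseteq> interior L}. Kle a c \<and> Kle b c"
    unfolding Kle_def by blast
qed simp

text \<open>Removing from a compact neighbourhood of \<open>K\<close> a small ball around \<open>y \<notin> K\<close>
  leaves a compact neighbourhood of \<open>K\<close>.\<close>
lemma is_sup_in_Kspace_compact_neighbourhoods:
  assumes lc: "locally_compact_space (euclidean :: 'a::metric_space topology)"
    and K: "K \<in> (Kspace :: 'a set set)"
  shows "is_sup_in Kspace Kle {L\<in>Kspace. K \<subseteq> interior L} K"
proof -
  let ?N = "{L\<in>Kspace. K \<subseteq> interior L}"
  have "\<Inter>?N \<subseteq> K"
  proof
    fix y assume y: "y \<in> \<Inter>?N"
    show "y \<in> K"
    proof (rule ccontr)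
      assume "y \<notin> K"
      moreover have "open (- K)" using K by (auto simp: Kspace_def compact_imp_closed)
      ultimately obtain e where "e > 0" "cball y e \<subseteq> - K" using open_contains_cball by blast
      obtain L0 where L0: "compact L0" "K \<subseteq> interior L0"
        using locally_compact_space_compact_neighbourhood[OF lc] K by (auto simp: Kspace_def)
      define L where "L = L0 - ball y e"
      have "K \<subseteq> interior L0 \<inter> - cball y e" using L0 \<open>cball y e \<subseteq> - K\<close> by blast
      also have "\<dots> \<subseteq> interior L"
        unfolding L_def by (intro interior_maximal) (use interior_subset ball_subset_cball in auto)
      finally have "K \<subseteq> interior L" .
      moreover have "compact L" unfolding L_def using L0(1) by (intro compact_diff) auto
      ultimately have "L \<in> ?N" using K interior_subset by (fastforce simp: Kspace_def)
      then have "y \<in> L" using y by blast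
      then show False using \<open>e > 0\<close> by (simp add: L_def)
    qed
  qed
  moreover have "K \<subseteq> \<Inter>?N" using interior_subset by blast
  ultimately have "\<Inter>?N = K" by blast
  then show ?thesis
    using is_sup_in_Kspace_Inter[OF directed_in_Kspace_compact_neighbourhoods[OF lc K]] by simp
qed

lemma way_below_Kspace_set_eq:
  "K \<in> Kspace \<Longrightarrow>
    {L\<in>Kspace. way_below Kspace Kle L K} = {L\<in>Kspace. K \<subseteq> interior (L :: 'a::metric_space set)}"
  using way_below_Kspace_iff by blast

lemma locally_compact_imp_K_continuous_semilattice:
  assumes "locally_compact_space (euclidean :: 'a::metric_space topology)"
  shows "K_continuous_semilattice (X :: 'a itself)"
  unfolding K_continuous_semilattice_def continuous_poset_def
proof (intro conjI ballI)
  fix K :: "'a set" assume "K \<in> Kspace"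
  then show "directed_in Kspace Kle {L\<in>Kspace. way_below Kspace Kle L K}"
    and "is_sup_in Kspace Kle {L\<in>Kspace. way_below Kspace Kle L K} K"
    unfolding way_below_Kspace_set_eq[OF \<open>K \<in> Kspace\<close>]
    by (rule directed_in_Kspace_compact_neighbourhoods[OF assms],
        rule is_sup_in_Kspace_compact_neighbourhoods[OF assms])
qed (rule directed_complete_Kspace)

lemma K_continuous_semilattice_imp_locally_compact:
  assumes "K_continuous_semilattice (X :: 'a::metric_space itself)"
  shows "locally_compact_space (euclidean :: 'a topology)"
  unfolding locally_compact_space_def
proof (intro ballI)
  fix x :: 'a
  have "{x} \<in> Kspace" by (simp add: Kspace_def)
  then have "directed_in Kspace Kle {L\<in>Kspace. way_below Kspace Kle L {x}}"
    using assms unfolding K_continuous_semilattice_def continuous_poset_def by blast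
  then obtain L where "L \<in> Kspace" "{x} \<subseteq> interior L"
    unfolding directed_in_def way_below_Kspace_set_eq[OF \<open>{x} \<in> Kspace\<close>] by blast
  then show "\<exists>U K. openin euclidean U \<and> compactin euclidean K \<and> x \<in> U \<and> U \<subseteq> K"
    using interior_subset by (intro exI[of _ "interior L"] exI[of _ L]) (auto simp: Kspace_def)
qed

lemma locally_compact_imp_xi_sigma_continuous:
  assumes lc: "locally_compact_space (euclidean :: 'a::metric_space topology)"
  shows "xi_sigma_continuous (X :: 'a itself)"
  unfolding xi_sigma_continuous_def
proof (intro allI impI)
  fix \<U> :: "'a set set" assume "scott_open Kspace Kle \<U>"
  then have up: "\<And>L z. L \<in> \<U> \<Longrightarrow> z \<in> L \<Longrightarrow> {z} \<in> \<U>"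
    and inacc: "\<And>D s. directed_in Kspace Kle D \<Longrightarrow> is_sup_in Kspace Kle D s \<Longrightarrow> s \<in> \<U> \<Longrightarrow> D \<inter> \<U> \<noteq> {}"
    unfolding scott_open_def Kle_def Kspace_def by auto
  have "\<exists>T. open T \<and> x \<in> T \<and> T \<subseteq> {y. {y} \<in> \<U>}" if x: "{x} \<in> \<U>" for x :: 'a
  proof -
    have "{x} \<in> Kspace" by (simp add: Kspace_def)
    then obtain L where "{x} \<subseteq> interior L" "L \<in> \<U>"
      using inacc[OF directed_in_Kspace_compact_neighbourhoods[OF lc]
          is_sup_in_Kspace_compact_neighbourhoods[OF lc] x]
      by blast
    then show ?thesis using up interior_subset by (intro exI[of _ "interior L"]) blast
  qed
  then show "open {x. {x} \<in> \<U>}" by (subst open_subopen) simp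
qed

subsection \<open>The lattice of open sets\<close>

lemma is_sup_in_opens_Union:
  "A \<subseteq> {U. open U} \<Longrightarrow> is_sup_in {U :: 'a::topological_space set. open U} (\<subseteq>) A (\<Union>A)"
  unfolding is_sup_in_def by auto

lemma is_sup_in_opens_eq_Union:
  assumes "A \<subseteq> {U. open U}" "is_sup_in {U :: 'a::topological_space set. open U} (\<subseteq>) A s"
  shows "s = \<Union>A"
proof
  show "\<Union>A \<subseteq> s" using assms(2) unfolding is_sup_in_def by blast
  show "s \<subseteq> \<Union>A" using assms unfolding is_sup_in_def by blast
qed

lemma way_below_opens_imp_subset:
  assumes "way_below {U :: 'a::topological_space set. open U} (\<subseteq>) U V" "open V"
  shows "U \<subseteq> V"
proof -
  have "directed_in {U. open U} (\<subseteq>) {V}" "is_sup_in {U. open U} (\<subseteq>) {V} V"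
    using \<open>open V\<close> by (auto simp: directed_in_def is_sup_in_def)
  from way_belowD[OF assms(1) this] show ?thesis by simp
qed

lemma way_below_opens_Un:
  assumes "way_below {U :: 'a::topological_space set. open U} (\<subseteq>) U V"
    and "way_below {U :: 'a set. open U} (\<subseteq>) W V"
  shows "way_below {U :: 'a set. open U} (\<subseteq>) (U \<union> W) V"
  unfolding way_below_def
proof (intro allI impI, elim conjE)
  fix D s assume sup: "directed_in {U. open U} (\<subseteq>) D" "is_sup_in {U. open U} (\<subseteq>) D s" "V \<subseteq> s"
  obtain d1 d2 where "d1 \<in> D" "U \<subseteq> d1" "d2 \<in> D" "W \<subseteq> d2"
    using way_belowD[OF assms(1) sup] way_belowD[OF assms(2) sup] by blast
  moreover obtain c where "c \<in> D" "d1 \<subseteq> c" "d2 \<subseteq> c"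
    using sup(1) \<open>d1 \<in> D\<close> \<open>d2 \<in> D\<close> unfolding directed_in_def by blast
  ultimately show "\<exists>d\<in>D. U \<union> W \<subseteq> d" by blast
qed

lemma compact_between_imp_way_below_opens:
  assumes "compact K" "U \<subseteq> K" "K \<subseteq> V"
  shows "way_below {U :: 'a::topological_space set. open U} (\<subseteq>) U V"
  unfolding way_below_def
proof (intro allI impI, elim conjE)
  fix D s assume dir: "directed_in {U. open U} (\<subseteq>) D"
    and sup: "is_sup_in {U. open U} (\<subseteq>) D s" and "V \<subseteq> s"
  have DO: "D \<subseteq> {U. open U}" using dir by (simp add: directed_in_def)
  have "K \<subseteq> \<Union>D"
    using is_sup_in_opens_eq_Union[OF DO sup] assms(3) \<open>V \<subseteq> s\<close> by simp
  then obtain F where "F \<subseteq> D" "finite F" "K \<subseteq> \<Union>F"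
    using compactE[OF \<open>compact K\<close>] DO by blast
  moreover obtain d where "d \<in> D" "\<forall>f\<in>F. f \<subseteq> d"
    using directed_in_finite_upper_bound[OF dir \<open>finite F\<close> \<open>F \<subseteq> D\<close>] by blast
  ultimately show "\<exists>d\<in>D. U \<subseteq> d" using assms(2) by blast
qed

text \<open>Apply \<open>U \<ll> UNIV\<close> to the directed family \<open>\<Union>F \<union> - C\<close>, \<open>F\<close> a finite
  subfamily of a given open cover of \<open>C\<close>.\<close>
lemma way_below_UNIV_opens_imp_compact:
  assumes wb: "way_below {U :: 'a::topological_space set. open U} (\<subseteq>) U UNIV"
    and "closed C" "C \<subseteq> U"
  shows "compact C"
  unfolding compact_eq_Heine_Borel
proof (intro allI impI, elim conjE)
  fix \<C> assume "\<forall>c\<in>\<C>. open c" "C \<subseteq> \<Union>\<C>"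
  define D where "D = (\<lambda>F. \<Union>F \<union> - C) ` {F. F \<subseteq> \<C> \<and> finite F}"
  have memD: "\<Union>F \<union> - C \<in> D" if "F \<subseteq> \<C>" "finite F" for F
    unfolding D_def using that by simp
  have DO: "D \<subseteq> {U. open U}"
    unfolding D_def using \<open>\<forall>c\<in>\<C>. open c\<close> \<open>closed C\<close> by auto
  have dir: "directed_in {U. open U} (\<subseteq>) D"
    unfolding directed_in_def
  proof (intro conjI ballI)
    show "D \<noteq> {}" using memD[of "{}"] by blast
    fix a b assume "a \<in> D" "b \<in> D"
    then obtain F1 F2 where F: "F1 \<subseteq> \<C>" "finite F1" "a = \<Union>F1 \<union> - C"
      "F2 \<subseteq> \<C>" "finite F2" "b = \<Union>F2 \<union> - C"
      unfolding D_def by auto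
    then have "\<Union>(F1 \<union> F2) \<union> - C \<in> D" by (intro memD) auto
    moreover have "a \<subseteq> \<Union>(F1 \<union> F2) \<union> - C" "b \<subseteq> \<Union>(F1 \<union> F2) \<union> - C"
      using F(3,6) by auto
    ultimately show "\<exists>c\<in>D. a \<subseteq> c \<and> b \<subseteq> c" by blast
  qed (rule DO)
  have "\<Union>D = UNIV"
  proof (intro set_eqI iffI)
    fix z :: 'a
    show "z \<in> \<Union>D"
    proof (cases "z \<in> C")
      case True
      then obtain c where "c \<in> \<C>" "z \<in> c" using \<open>C \<subseteq> \<Union>\<C>\<close> by blast
      then show ?thesis using memD[of "{c}"] by blast
    next
      case False
      then show ?thesis using memD[of "{}"] by blast
    qed
  qed simp
  then obtain d where "d \<in> D" "U \<subseteq> d"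
    using way_belowD[OF wb dir is_sup_in_opens_Union[OF DO]] by auto
  then obtain F where "F \<subseteq> \<C>" "finite F" "U \<subseteq> \<Union>F \<union> - C"
    unfolding D_def by blast
  then show "\<exists>F\<subseteq>\<C>. finite F \<and> C \<subseteq> \<Union>F"
    using \<open>C \<subseteq> U\<close> by blast
qed

lemma locally_compact_imp_core_compact:
  assumes lc: "locally_compact_space (euclidean :: 'a::metric_space topology)"
  shows "core_compact (X :: 'a itself)"
  unfolding core_compact_def continuous_lattice_def continuous_poset_def directed_complete_def
proof (intro conjI allI impI ballI)
  let ?W = "\<lambda>V. {U \<in> {U :: 'a set. open U}. way_below {U. open U} (\<subseteq>) U V}"
  show "\<exists>s. is_sup_in {U. open U} (\<subseteq>) A s" if "A \<subseteq> {U :: 'a set. open U}" for A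
    using is_sup_in_opens_Union[OF that] by blast
  then show "\<exists>s. is_sup_in {U. open U} (\<subseteq>) D s" if "directed_in {U :: 'a set. open U} (\<subseteq>) D" for D
    using that by (simp add: directed_in_def)
  fix V :: "'a set" assume "V \<in> {U. open U}"
  then have "open V" by simp
  have "way_below {U. open U} (\<subseteq>) {} V"
    using compact_between_imp_way_below_opens[of "{}" "{}" V] by simp
  then show "directed_in {U. open U} (\<subseteq>) (?W V)"
    unfolding directed_in_def using way_below_opens_Un by blast
  have "V \<subseteq> \<Union>(?W V)"
  proof
    fix x assume "x \<in> V"
    then obtain U K where "open U" "compact K" "x \<in> U" "U \<subseteq> K" "K \<subseteq> V"
      using lc \<open>open V\<close> locally_compact_space_neighbourhood_base[of "euclidean :: 'a topology"]
      by (simp add: neighbourhood_base_of compactin_euclidean_iff) meson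
    then show "x \<in> \<Union>(?W V)" using compact_between_imp_way_below_opens by blast
  qed
  moreover have "\<Union>(?W V) \<subseteq> V" using way_below_opens_imp_subset \<open>open V\<close> by blast
  ultimately have "\<Union>(?W V) = V" by blast
  then show "is_sup_in {U. open U} (\<subseteq>) (?W V) V"
    using is_sup_in_opens_Union[of "?W V"] by auto
qed

lemma core_compact_imp_locally_compact:
  assumes "core_compact (X :: 'a::metric_space itself)"
  shows "locally_compact_space (euclidean :: 'a topology)"
  unfolding locally_compact_space_def
proof (intro ballI)
  fix x :: 'a
  let ?W = "{U \<in> {U :: 'a set. open U}. way_below {U. open U} (\<subseteq>) U UNIV}"
  have "is_sup_in {U. open U} (\<subseteq>) ?W UNIV"
    using assms unfolding core_compact_def continuous_lattice_def continuous_poset_def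
    by (simp del: Collect_mem_eq)
  then have "\<Union>?W = UNIV" using is_sup_in_opens_eq_Union[of ?W] by auto
  then obtain U where U: "open U" "way_below {U. open U} (\<subseteq>) U UNIV" "x \<in> U" by blast
  then obtain e where "e > 0" "cball x e \<subseteq> U" using open_contains_cball by blast
  then have "compact (cball x e)" using way_below_UNIV_opens_imp_compact[OF U(2)] by simp
  then show "\<exists>U K. openin euclidean U \<and> compactin euclidean K \<and> x \<in> U \<and> U \<subseteq> K"
    using \<open>e > 0\<close> by (intro exI[of _ "ball x e"] exI[of _ "cball x e"]) auto
qed

theorem mainTheorem15:
  fixes X :: "'a::metric_space itself"
  shows "(locally_compact_space (euclidean :: 'a topology) \<longleftrightarrow>
            K_continuous_semilattice X \<and> xi_sigma_continuous X)
       \<and> (locally_compact_space (euclidean :: 'a topology) \<longleftrightarrow>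
            K_continuous_semilattice X \<and> property_Q X)
       \<and> (locally_compact_space (euclidean :: 'a topology) \<longleftrightarrow> K_continuous_semilattice X)
       \<and> (locally_compact_space (euclidean :: 'a topology) \<longleftrightarrow> core_compact X)"
  using locally_compact_imp_K_continuous_semilattice K_continuous_semilattice_imp_locally_compact
    locally_compact_imp_xi_sigma_continuous property_Q_metric
    locally_compact_imp_core_compact core_compact_imp_locally_compact
  by metis

end
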